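(* Let $c\ge\lfloor n/2\rfloor$ and $\mathbf{s}_n\in\mathcal{B}(n,c,d_1)$ with $add(\mathbf{s}_n)=t_1$. Suppose that for some integer $h$ with $1\le h\le n-1$, the shifted sequence $R^{h}(\mathbf{s}_n)$ belongs to $\mathcal{B}(n,c,d_2)$ with $add(R^{h}(\mathbf{s}_n))=t_2$. Let $b=h-(n-c-d_1)$. Then $t_1\le b<d_1+d_2-t_2$.
   Context: All sequences are binary (entries in $\mathbb{Z}_2$), $\overline{x}=x\oplus1$, $x\bmod d$ is the least nonnegative residue, and $\mathbf{a}^q$ is the concatenation of $q$ copies of $\mathbf a$. For $\mathbf{s}_n=(s_0,\dots,s_{n-1})$, $\mathbf{s}_j=(s_0,\dots,s_{j-1})$. A length-$m$ sequence is periodic if it is the concatenation of $m/e$ copies of a length-$e$ sequence for a proper divisor $e$ of $m$, aperiodic otherwise. Right circular shift: $R^k(\mathbf{s}_n)=(s_{n-k},\dots,s_{n-1},s_0,\dots,s_{n-k-1})$. For $c\ge\lfloor n/2\rfloor$ and $1\le d\le\min\{n-c,\lfloor n/2\rfloor\}$, $\mathcal{B}(n,c,d)$ is the set of aperiodic length-$n$ sequences $\mathbf{s}_n$ with $\mathbf{s}_d$ aperiodic and $\mathbf{s}_{c+d}=(s_0,\dots,s_{d-1})^q(s_0,\dots,s_{r-1},\overline{s_r})$, where $q=\lfloor(c+d-1)/d\rfloor$, $r=c+d-1-qd$, and $s_{c+d},\dots,s_{n-1}$ are arbitrary. For $\mathbf{s}_n\in\mathcal{B}(n,c,d)$, $add(\mathbf{s}_n)$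 is the integer $t\ge0$ such that $s_{n-1-i}=s_{(d-1-i)\bmod d}$ for $0\le i<t$ and $s_{n-1-t}\neq s_{(d-1-t)\bmod d}$. *)

theory Defs
  imports Main
begin

text \<open>Binary sequences are bool lists; entry x of Z_2 is rendered as a bool,
  and the complement of x is Not x.  The length-n sequence s has entries s ! i.\<close>

definition periodic :: "bool list \<Rightarrow> bool" where
  "periodic s \<longleftrightarrow> (\<exists>e. 0 < e \<and> e < length s \<and> e dvd length s \<and>
       s = concat (replicate (length s div e) (take e s)))"

definition aperiodic :: "bool list \<Rightarrow> bool" where
  "aperiodic s \<longleftrightarrow> \<not> periodic s"

definition B :: "nat \<Rightarrow> nat \<Rightarrow> nat \<Rightarrow> bool list set" where
  "B n c d = {s. c \<ge> n div 2 \<and> 1 \<le> d \<and> d \<le> min (n - c) (n div 2) \<and>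
      length s = n \<and> aperiodic s \<and> aperiodic (take d s) \<and>
      (let q = (c + d - 1) div d; r = c + d - 1 - q * d in
         take (c + d) s = concat (replicate q (take d s)) @ take r s @ [\<not> s ! r])}"

definition add :: "nat \<Rightarrow> bool list \<Rightarrow> nat" where
  "add d s = (THE t. t < length s \<and>
      (\<forall>i<t. s ! (length s - 1 - i) = s ! nat ((int d - 1 - int i) mod int d)) \<and>
      s ! (length s - 1 - t) \<noteq> s ! nat ((int d - 1 - int t) mod int d))"

definition rshift :: "nat \<Rightarrow> bool list \<Rightarrow> bool list" where
  "rshift k s = drop (length s - k) s @ take (length s - k) s"

end

theory Submission
  imports Defs
begin

text \<open>Read s cyclically as a function F on the integers. Membership in B(n,c,d) with
  add(s) = t says that F repeats its primitive prefix of length d on the window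
  [-t, c+d-2] and that this repetition breaks at c+d-1. The sequence R^h(s) yields a window
  of the same kind for F, translated by -h or by n-h. If either translate met the window of
  s in at least d1+d2-1 positions, Fine and Wilf's theorem would give the common period
  gcd(d1,d2) there, primitivity would force d1 = d2, and then the break of each run would
  lie inside the other run unless both windows end at the same place, i.e. unless the
  translation is 0. The two inequalities say exactly that neither translate overlaps that
  much.\<close>

definition period_on :: "(int \<Rightarrow> 'a) \<Rightarrow> int \<Rightarrow> int \<Rightarrow> int \<Rightarrow> bool" where
  "period_on F p lo hi \<longleftrightarrow> (\<forall>j. lo \<le> j \<longrightarrow> j + p \<le> hi \<longrightarrow> F j = F (j + p))"

lemma period_on_subinterval:
  "period_on F p lo hi \<Longrightarrow> lo \<le> lo' \<Longrightarrow> hi' \<le> hi \<Longrightarrow> period_on F p lo' hi'"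
  unfolding period_on_def by auto

lemma period_on_iterate:
  assumes "period_on F p lo hi" "0 \<le> p" "lo \<le> i" "i + int k * p \<le> hi"
  shows "F i = F (i + int k * p)"
  using assms(4)
proof (induction k)
  case 0
  then show ?case by simp
next
  case (Suc k)
  then have last: "i + int k * p + p \<le> hi" by (simp add: algebra_simps)
  moreover have "lo \<le> i + int k * p"
    using assms(2,3) mult_nonneg_nonneg[of "int k" p] by linarith
  ultimately have "F (i + int k * p) = F (i + int k * p + p)"
    using assms(1) unfolding period_on_def by blast
  with Suc.IH last assms(2) show ?case by (simp add: algebra_simps)
qed

lemma period_on_eq_mod:
  assumes "period_on F p lo hi" "0 < p" "lo \<le> j" "j \<le> hi"
  shows "F j = F (lo + (j - lo) mod p)"
proof -
  obtain k where k: "int k = (j - lo) div p"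
    using assms(2,3) by (metis pos_imp_zdiv_nonneg_iff diff_ge_0_iff_ge nonneg_int_cases)
  then have j: "j = lo + (j - lo) mod p + int k * p" by (simp add: algebra_simps)
  have "F (lo + (j - lo) mod p) = F (lo + (j - lo) mod p + int k * p)"
    by (rule period_on_iterate[OF assms(1)]) (use assms j in auto)
  with j show ?thesis by simp
qed

lemma period_on_cong:
  assumes "period_on F p lo hi" "0 < p" "lo \<le> i" "i \<le> hi" "lo \<le> j" "j \<le> hi"
    and "i mod p = j mod p"
  shows "F i = F j"
proof -
  have "(i - lo) mod p = (j - lo) mod p" using assms(7) by (metis mod_diff_cong)
  then show ?thesis using period_on_eq_mod[OF assms(1,2)] assms(3-6) by metis
qed

lemma period_on_diff:
  assumes "period_on F p lo hi" "period_on F q lo hi" "p < q"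
  shows "period_on F (q - p) lo (hi - p)"
  unfolding period_on_def
proof (intro allI impI)
  fix j assume "lo \<le> j" "j + (q - p) \<le> hi - p"
  then have "F j = F (j + q)" and "F (j + (q - p)) = F (j + (q - p) + p)"
    using assms unfolding period_on_def by auto
  then show "F j = F (j + (q - p))" by simp
qed

text \<open>A period g of p that holds up to hi - p propagates to hi, because every position
  is congruent modulo p, hence modulo g, to one in the first p positions.\<close>
lemma period_on_extend:
  assumes g: "period_on F g lo (hi - p)" "0 < g" "g dvd p"
    and p: "period_on F p lo hi" "0 < p" "p - 1 \<le> hi - p - lo"
  shows "period_on F g lo hi"
  unfolding period_on_def
proof (intro allI impI)
  fix j assume j: "lo \<le> j" "j + g \<le> hi"
  define r where "r i = lo + (i - lo) mod p" for i
  have r_window: "lo \<le> r i" "r i \<le> hi - p" for i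
    using p(2,3) pos_mod_bound[of p "i - lo"] pos_mod_sign[of p "i - lo"]
    unfolding r_def by linarith+
  have r_mod: "r i mod g = i mod g" for i
  proof -
    have "r i mod g = (lo + (i - lo) mod p mod g) mod g" unfolding r_def by (simp add: mod_simps)
    also have "\<dots> = i mod g" using g(3) by (simp add: mod_mod_cancel mod_simps)
    finally show ?thesis .
  qed
  have "F (r j) = F (r (j + g))"
    by (rule period_on_cong[OF g(1,2) r_window r_window]) (simp add: r_mod)
  moreover have "F j = F (r j)" "F (j + g) = F (r (j + g))"
    unfolding r_def using period_on_eq_mod[OF p(1,2)] j g(2) by auto
  ultimately show "F j = F (j + g)" by simp
qed

text \<open>Fine and Wilf's theorem: the Euclidean algorithm on the periods, with the
  window shrinking by the smaller period in each step.\<close>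
theorem fine_wilf:
  fixes p q lo hi :: int
  assumes "0 < p" "0 < q" "p + q - 2 \<le> hi - lo" "period_on F p lo hi" "period_on F q lo hi"
  shows "period_on F (gcd p q) lo hi"
  using assms
proof (induction "nat (p + q)" arbitrary: p q hi rule: less_induct)
  case less
  have step: "period_on F (gcd a b) lo hi"
    if "a < b" "0 < a" "a + b = p + q" "a + b - 2 \<le> hi - lo"
      "period_on F a lo hi" "period_on F b lo hi" for a b
  proof -
    have "period_on F (b - a) lo (hi - a)" "period_on F a lo (hi - a)"
      using that by (auto intro: period_on_diff period_on_subinterval)
    moreover have "nat (a + (b - a)) < nat (p + q)" using that less.prems by simp
    ultimately have "period_on F (gcd a (b - a)) lo (hi - a)"
      using that by (intro less.hyps) auto
    then have "period_on F (gcd a b) lo (hi - a)"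
      by (metis gcd.commute gcd_diff1)
    moreover have "a - 1 \<le> hi - a - lo" using that by linarith
    ultimately show ?thesis
      using that by (intro period_on_extend[of F "gcd a b" lo hi a]) auto
  qed
  consider "p < q" | "q < p" | "p = q" by linarith
  then show ?case
    using step[of p q] step[of q p] less.prems by cases (auto simp: gcd.commute)
qed

definition repeats_block_on ::
    "(int \<Rightarrow> 'a) \<Rightarrow> (int \<Rightarrow> 'a) \<Rightarrow> int \<Rightarrow> int \<Rightarrow> int \<Rightarrow> int \<Rightarrow> bool" where
  "repeats_block_on F U d \<sigma> lo hi \<longleftrightarrow> (\<forall>j. lo \<le> j \<longrightarrow> j \<le> hi \<longrightarrow> F j = U ((j - \<sigma>) mod d))"

definition primitive_block :: "(int \<Rightarrow> 'a) \<Rightarrow> int \<Rightarrow> bool" where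
  "primitive_block U d \<longleftrightarrow>
     (\<forall>g. 0 < g \<longrightarrow> g < d \<longrightarrow> g dvd d \<longrightarrow> (\<exists>m. 0 \<le> m \<and> m < d \<and> U m \<noteq> U (m mod g)))"

lemma repeats_block_on_subinterval:
  "repeats_block_on F U d \<sigma> lo hi \<Longrightarrow> lo \<le> lo' \<Longrightarrow> hi' \<le> hi \<Longrightarrow> repeats_block_on F U d \<sigma> lo' hi'"
  unfolding repeats_block_on_def by auto

lemma repeats_block_on_translate:
  assumes "repeats_block_on G U d 0 lo hi" "\<And>j. F j = G (j - \<sigma>)"
  shows "repeats_block_on F U d \<sigma> (lo + \<sigma>) (hi + \<sigma>)"
  using assms unfolding repeats_block_on_def by (auto simp: algebra_simps)

lemma repeats_block_on_period_on:
  assumes "repeats_block_on F U d \<sigma> lo hi" "0 \<le> d"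
  shows "period_on F d lo hi"
  unfolding period_on_def
proof (intro allI impI)
  fix j assume "lo \<le> j" "j + d \<le> hi"
  moreover have "(j + d - \<sigma>) mod d = (j - \<sigma>) mod d"
    by (metis diff_add_eq mod_add_self2)
  ultimately show "F j = F (j + d)"
    using assms unfolding repeats_block_on_def
    by (metis add_increasing2 order.trans le_add_same_cancel1)
qed

text \<open>Every residue m modulo d occurs, as j - \<sigma>, at a position j of a window of length d.\<close>
lemma repeats_block_on_block_mod:
  assumes R: "repeats_block_on F U d \<sigma> lo hi" and P: "period_on F g lo hi" "0 < g" "g dvd d"
    and "d - 1 \<le> hi - lo" "0 \<le> m" "m < d"
  shows "U m = U (m mod g)"
proof -
  have "0 < d" using assms by simp
  define pos where "pos x = lo + (x + \<sigma> - lo) mod d" for x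
  have pos_window: "lo \<le> pos x" "pos x \<le> hi" for x
    using \<open>0 < d\<close> \<open>d - 1 \<le> hi - lo\<close> pos_mod_bound[of d "x + \<sigma> - lo"] pos_mod_sign[of d "x + \<sigma> - lo"]
    unfolding pos_def by linarith+
  have pos_res: "(pos x - \<sigma>) mod d = x mod d" for x
  proof -
    have "pos x - \<sigma> = (x + \<sigma> - lo) mod d - (\<sigma> - lo)" unfolding pos_def by simp
    then show ?thesis by (metis mod_diff_left_eq diff_add_cancel add_diff_eq)
  qed
  have "(pos x - \<sigma>) mod g = x mod g" for x
    using pos_res[of x] P(3) by (metis mod_mod_cancel)
  then have "pos m mod g = pos (m mod g) mod g"
    by (metis diff_add_cancel mod_add_left_eq)
  then have "F (pos m) = F (pos (m mod g))"
    by (intro period_on_cong[OF P(1,2)] pos_window)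
  moreover have "0 \<le> m mod g" "m mod g < g" "g \<le> d"
    using P(2,3) zdvd_imp_le \<open>0 < d\<close> by simp_all
  ultimately show ?thesis
    using R pos_window pos_res[of m] pos_res[of "m mod g"] \<open>0 \<le> m\<close> \<open>m < d\<close>
    unfolding repeats_block_on_def by (simp add: order_less_le_trans)
qed

lemma primitive_blocks_same_length:
  assumes R1: "repeats_block_on F U1 d1 \<sigma>1 lo hi" "primitive_block U1 d1" "0 < d1"
    and R2: "repeats_block_on F U2 d2 \<sigma>2 lo hi" "primitive_block U2 d2" "0 < d2"
    and overlap: "d1 + d2 - 2 \<le> hi - lo"
  shows "d1 = d2"
proof -
  define g where "g = gcd d1 d2"
  have g: "period_on F g lo hi" "0 < g"
    unfolding g_def using R1 R2
    by (simp_all add: fine_wilf[OF R1(3) R2(3) overlap] repeats_block_on_period_on)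
  have "g = d" if "repeats_block_on F U d \<sigma> lo hi" "primitive_block U d" "0 < d" "g dvd d"
    "d - 1 \<le> hi - lo" for U d \<sigma>
  proof (rule ccontr)
    assume "g \<noteq> d"
    with \<open>g dvd d\<close> \<open>0 < d\<close> have "g < d" using zdvd_imp_le by fastforce
    then show False
      using that g repeats_block_on_block_mod unfolding primitive_block_def by metis
  qed
  then have "g = d1" "g = d2"
    using R1 R2 overlap unfolding g_def by auto
  then show ?thesis by simp
qed

lemma period_on_break_outside:
  assumes "period_on F p lo hi" "F (e + 1) \<noteq> F (e + 1 - p)" "lo \<le> e + 1 - p"
  shows "hi \<le> e"
  using assms unfolding period_on_def by (metis diff_add_cancel not_le add1_zle_eq)

text \<open>Two maximal runs of primitive blocks that overlap in d1 + d2 - 1 positions coincide: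
  Fine and Wilf equalize the block lengths, and then the end of either run would
  otherwise lie inside the other.\<close>
lemma maximal_runs_coincide:
  assumes R1: "repeats_block_on F U1 d1 \<sigma>1 lo1 hi1" "primitive_block U1 d1" "0 < d1"
      "F (hi1 + 1) \<noteq> F (hi1 + 1 - d1)"
    and R2: "repeats_block_on F U2 d2 \<sigma>2 lo2 hi2" "primitive_block U2 d2" "0 < d2"
      "F (hi2 + 1) \<noteq> F (hi2 + 1 - d2)"
    and overlap: "d1 + d2 - 2 \<le> min hi1 hi2 - max lo1 lo2"
  shows "d1 = d2" "hi1 = hi2"
proof -
  have "repeats_block_on F U1 d1 \<sigma>1 (max lo1 lo2) (min hi1 hi2)"
    "repeats_block_on F U2 d2 \<sigma>2 (max lo1 lo2) (min hi1 hi2)"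
    using R1(1) R2(1) by (auto elim: repeats_block_on_subinterval)
  then show "d1 = d2"
    using primitive_blocks_same_length R1(2,3) R2(2,3) overlap by blast
  moreover have "period_on F d1 lo1 hi1" "period_on F d2 lo2 hi2"
    using R1(1,3) R2(1,3) by (simp_all add: repeats_block_on_period_on)
  moreover have "lo2 \<le> hi1 + 1 - d2" "lo1 \<le> hi2 + 1 - d1"
    using overlap R1(3) R2(3) max.cobounded1[of lo1 lo2] max.cobounded2[of lo2 lo1]
      min.cobounded1[of hi1 hi2] min.cobounded2[of hi2 hi1] by linarith+
  ultimately have "hi2 \<le> hi1" "hi1 \<le> hi2"
    using period_on_break_outside R1(4) R2(4) by metis+
  then show "hi1 = hi2" by simp
qed

lemma nth_concat_replicate_take:
  assumes "length u = d" "r \<le> d" "j < q * d + r"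
  shows "(concat (replicate q u) @ take r u) ! j = u ! (j mod d)"
  using assms(3)
proof (induction q arbitrary: j)
  case 0
  then show ?case using assms(1,2) by simp
next
  case (Suc q)
  show ?case
  proof (cases "j < d")
    case True
    then show ?thesis using assms(1) by (simp add: nth_append)
  next
    case False
    then have "(concat (replicate (Suc q) u) @ take r u) ! j
        = (concat (replicate q u) @ take r u) ! (j - d)"
      using assms(1) by (simp add: nth_append)
    also have "\<dots> = u ! ((j - d) mod d)" using Suc False by (intro Suc.IH) auto
    finally show ?thesis using False by (simp add: le_mod_geq)
  qed
qed

definition cyclic_nth :: "'a list \<Rightarrow> int \<Rightarrow> 'a" where
  "cyclic_nth s j = s ! nat (j mod int (length s))"

lemma cyclic_nth_add_mult: "cyclic_nth s (j + k * int (length s)) = cyclic_nth s j"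
  unfolding cyclic_nth_def by simp

lemma cyclic_nth_of_nat: "i < length s \<Longrightarrow> cyclic_nth s (int i) = s ! i"
  unfolding cyclic_nth_def by simp

lemma cyclic_nth_rotate:
  assumes "s \<noteq> []"
  shows "cyclic_nth (rotate m s) j = cyclic_nth s (j + int m)"
proof -
  have "nat (j mod int (length s)) < length s" using assms by (simp add: nat_less_iff)
  then have "cyclic_nth (rotate m s) j = s ! ((m + nat (j mod int (length s))) mod length s)"
    unfolding cyclic_nth_def by (simp add: nth_rotate)
  also have "(m + nat (j mod int (length s))) mod length s = nat ((j + int m) mod int (length s))"
  proof -
    have "int ((m + nat (j mod int (length s))) mod length s)
        = (int m + j mod int (length s)) mod int (length s)"
      using assms by (simp add: of_nat_mod)
    also have "\<dots> = (j + int m) mod int (length s)" by (simp add: mod_simps add.commute)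
    finally show ?thesis by (metis nat_int)
  qed
  finally show ?thesis unfolding cyclic_nth_def .
qed

lemma rshift_eq_rotate: "h \<le> length s \<Longrightarrow> rshift h s = rotate (length s - h) s"
  unfolding rshift_def by (cases "h = 0") (simp_all add: rotate_drop_take)

lemma cyclic_nth_rshift:
  assumes "s \<noteq> []" "h \<le> length s"
  shows "cyclic_nth s j = cyclic_nth (rshift h s) (j + int h)"
    and "cyclic_nth s j = cyclic_nth (rshift h s) (j - (int (length s) - int h))"
proof -
  have rotate: "cyclic_nth (rshift h s) i = cyclic_nth s (i + int (length s - h))" for i
    using assms by (simp add: rshift_eq_rotate cyclic_nth_rotate)
  show "cyclic_nth s j = cyclic_nth (rshift h s) (j + int h)"
    using cyclic_nth_add_mult[of s j 1] assms(2) by (simp add: rotate of_nat_diff)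
  show "cyclic_nth s j = cyclic_nth (rshift h s) (j - (int (length s) - int h))"
    using assms(2) by (simp add: rotate of_nat_diff)
qed

lemma B_D:
  assumes "s \<in> B n c d"
  shows "length s = n" "1 \<le> d" "d \<le> c" "c + d \<le> n" "aperiodic (take d s)"
  using assms unfolding B_def by auto

lemma B_prefix:
  assumes "s \<in> B n c d"
  shows "\<And>j. j < c + d - 1 \<Longrightarrow> s ! j = s ! (j mod d)" and "s ! (c + d - 1) \<noteq> s ! (c - 1)"
proof -
  note D = B_D[OF assms]
  define q where "q = (c + d - 1) div d"
  define r where "r = (c + d - 1) mod d"
  define u where "u = take d s"
  have qr: "q * d + r = c + d - 1" "r < d" using D unfolding q_def r_def by simp_all
  have u: "length u = d" "\<And>i. i < d \<Longrightarrow> u ! i = s ! i" using D unfolding u_def by simp_all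
  let ?X = "concat (replicate q u) @ take r u"
  have len: "length ?X = c + d - 1" using u(1) qr by (simp add: length_concat sum_list_replicate)
  have "take (c + d) s = ?X @ [\<not> s ! r]"
    using assms qr(2) unfolding B_def Let_def q_def r_def u_def
    by (simp add: minus_div_mult_eq_mod min_def)
  then have X: "s ! j = (?X @ [\<not> s ! r]) ! j" if "j < c + d" for j
    using that by (metis nth_take)
  show prefix: "s ! j = s ! (j mod d)" if "j < c + d - 1" for j
  proof -
    have "s ! j = (?X @ [\<not> s ! r]) ! j" using that by (intro X) simp
    also have "\<dots> = ?X ! j" using that len by (intro nth_append_left) simp
    also have "\<dots> = u ! (j mod d)"
      using that qr by (intro nth_concat_replicate_take u(1)) simp_all
    finally show ?thesis using u(2) D(2) by simp
  qed
  have "s ! (c + d - 1) = (?X @ [\<not> s ! r]) ! (c + d - 1)" using D by (intro X) simp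
  also have "\<dots> = (\<not> s ! r)" using len by (metis nth_append_length)
  finally have "s ! (c + d - 1) = (\<not> s ! r)" .
  moreover have "s ! (c - 1) = s ! r"
  proof -
    have "(c - 1) mod d = r"
      unfolding r_def using D by (metis Nat.add_diff_assoc2 le_trans mod_add_self2)
    then show ?thesis using prefix[of "c - 1"] D by simp
  qed
  ultimately show "s ! (c + d - 1) \<noteq> s ! (c - 1)" by simp
qed

lemma B_break:
  assumes "s \<in> B n c d"
  shows "cyclic_nth s (int c + int d - 1) \<noteq> cyclic_nth s (int c - 1)"
proof -
  note D = B_D[OF assms]
  have "c + d - 1 < length s" "c - 1 < length s" using D by simp_all
  then have "cyclic_nth s (int (c + d - 1)) \<noteq> cyclic_nth s (int (c - 1))"
    using B_prefix(2)[OF assms] by (metis cyclic_nth_of_nat)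
  moreover have "int (c + d - 1) = int c + int d - 1" "int (c - 1) = int c - 1" using D by simp_all
  ultimately show ?thesis by simp
qed

definition tail_agrees :: "nat \<Rightarrow> 'a list \<Rightarrow> nat \<Rightarrow> bool" where
  "tail_agrees d s i \<longleftrightarrow> s ! (length s - 1 - i) = s ! nat ((int d - 1 - int i) mod int d)"

lemma add_eq_Least:
  assumes "t < length s" "\<not> tail_agrees d s t"
  shows "add d s = (LEAST i. \<not> tail_agrees d s i)"
proof -
  let ?t = "LEAST i. \<not> tail_agrees d s i"
  have least: "\<not> tail_agrees d s ?t" "\<And>i. i < ?t \<Longrightarrow> tail_agrees d s i" "?t \<le> t"
    using assms(2) not_less_Least by (metis LeastI, blast, metis Least_le)
  have "add d s = (THE i. i < length s \<and> (\<forall>j<i. tail_agrees d s j) \<and> \<not> tail_agrees d s i)"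
    unfolding add_def tail_agrees_def ..
  also have "\<dots> = ?t"
  proof (rule the_equality)
    show "?t < length s \<and> (\<forall>j<?t. tail_agrees d s j) \<and> \<not> tail_agrees d s ?t"
      using least assms(1) by (blast intro: le_less_trans)
  next
    fix i assume "i < length s \<and> (\<forall>j<i. tail_agrees d s j) \<and> \<not> tail_agrees d s i"
    then show "i = ?t" using least(1,2) by (metis Least_le le_neq_implies_less)
  qed
  finally show ?thesis .
qed

lemma B_repeats_prefix:
  assumes "s \<in> B n c d" "T \<le> n" "\<forall>i<T. tail_agrees d s i"
  shows "repeats_block_on (cyclic_nth s) (\<lambda>m. s ! nat m) (int d) 0 (- int T) (int c + int d - 2)"
  unfolding repeats_block_on_def
proof (intro allI impI)
  note D = B_D[OF assms(1)]
  fix j assume j: "- int T \<le> j" "j \<le> int c + int d - 2"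
  show "cyclic_nth s j = s ! nat ((j - 0) mod int d)"
  proof (cases "0 \<le> j")
    case True
    define k where "k = nat j"
    have k: "j = int k" "k < c + d - 1" using True j(2) D(2) unfolding k_def by linarith+
    have "cyclic_nth s j = s ! k" using k D by (simp add: cyclic_nth_of_nat)
    also have "\<dots> = s ! (k mod d)" using B_prefix(1)[OF assms(1) k(2)] .
    finally show ?thesis using k by (simp add: nat_mod_distrib)
  next
    case False
    define i where "i = nat (- 1 - j)"
    have i: "i < T" "j = - 1 - int i" using False j(1) unfolding i_def by auto
    have "cyclic_nth s j = cyclic_nth s (j + 1 * int (length s))"
      by (rule cyclic_nth_add_mult[symmetric])
    also have "j + 1 * int (length s) = int (n - 1 - i)" using i assms(2) D(1) by simp
    also have "cyclic_nth s (int (n - 1 - i)) = s ! (n - 1 - i)"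
      by (rule cyclic_nth_of_nat) (use i assms(2) D(1) in simp)
    also have "\<dots> = s ! nat ((int d - 1 - int i) mod int d)"
      using assms(3) i(1) D(1) unfolding tail_agrees_def by simp
    also have "int d - 1 - int i = j + int d" using i(2) by simp
    finally show ?thesis by simp
  qed
qed

text \<open>If the whole tail matched, the run would cover a full turn of the cycle, so the break
  at c + d - 1 would reappear one turn earlier, at c + d - 1 - n, inside the run.\<close>
lemma B_tail_disagrees:
  assumes "s \<in> B n c d"
  shows "\<exists>t<n. \<not> tail_agrees d s t"
proof (rule ccontr)
  note D = B_D[OF assms]
  assume "\<not> ?thesis"
  then have "repeats_block_on (cyclic_nth s) (\<lambda>m. s ! nat m) (int d) 0
      (- int n) (int c + int d - 2)"
    using B_repeats_prefix[OF assms le_refl] by blast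
  then have "period_on (cyclic_nth s) (int d) (- int n) (int c + int d - 2)"
    by (rule repeats_block_on_period_on) simp
  then have "cyclic_nth s (int c - 1 - int n) = cyclic_nth s (int c - 1 - int n + int d)"
    using D unfolding period_on_def by simp
  moreover have "cyclic_nth s (j - int n) = cyclic_nth s j" for j
    using cyclic_nth_add_mult[of s "j - int n" 1] D(1) by simp
  ultimately have "cyclic_nth s (int c - 1) = cyclic_nth s (int c + int d - 1)"
    by (metis diff_add_eq diff_right_commute)
  then show False using B_break[OF assms] by simp
qed

lemma B_add:
  assumes "s \<in> B n c d"
  shows "add d s < n"
    and "repeats_block_on (cyclic_nth s) (\<lambda>m. s ! nat m) (int d) 0
      (- int (add d s)) (int c + int d - 2)"
proof -
  obtain t where t: "t < n" "\<not> tail_agrees d s t" using B_tail_disagrees[OF assms] by blast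
  then have add: "add d s = (LEAST i. \<not> tail_agrees d s i)"
    using B_D(1)[OF assms] by (intro add_eq_Least) simp_all
  show "add d s < n" unfolding add using t by (metis Least_le le_less_trans)
  then show "repeats_block_on (cyclic_nth s) (\<lambda>m. s ! nat m) (int d) 0
      (- int (add d s)) (int c + int d - 2)"
    unfolding add by (intro B_repeats_prefix[OF assms]) (auto dest: not_less_Least)
qed

lemma B_primitive_block:
  assumes "s \<in> B n c d"
  shows "primitive_block (\<lambda>m. s ! nat m) (int d)"
  unfolding primitive_block_def
proof (intro allI impI)
  note D = B_D[OF assms]
  fix g :: int assume g: "0 < g" "g < int d" "g dvd int d"
  show "\<exists>m. 0 \<le> m \<and> m < int d \<and> s ! nat m \<noteq> s ! nat (m mod g)"
  proof (rule ccontr)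
    assume no_witness: "\<not> ?thesis"
    define e where "e = nat g"
    have e4: "int e = g" using g(1) unfolding e_def by simp
    then have e: "0 < e" "e < d" "e dvd d" using g by auto
    have per: "s ! i = s ! (i mod e)" if "i < d" for i
      using no_witness that e4 by (metis nat_int of_nat_less_iff of_nat_0_le_iff zmod_int)
    define u where "u = take e (take d s)"
    have u: "length u = e" "\<And>i. i < e \<Longrightarrow> u ! i = s ! i" using e D unfolding u_def by simp_all
    have "take d s = concat (replicate (d div e) u)"
    proof (rule nth_equalityI)
      show "length (take d s) = length (concat (replicate (d div e) u))"
        using D e u(1) by (simp add: length_concat sum_list_replicate)
    next
      fix i assume "i < length (take d s)"
      then have "i < d" using D by simp
      then have "take d s ! i = s ! (i mod e)" using per by simp
      also have "\<dots> = u ! (i mod e)" using u(2) e(1) by simp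
      also have "\<dots> = (concat (replicate (d div e) u) @ take 0 u) ! i"
        using nth_concat_replicate_take[OF u(1), of 0 i "d div e"] \<open>i < d\<close> e(3) by simp
      finally show "take d s ! i = concat (replicate (d div e) u) ! i" by simp
    qed
    moreover have "length (take d s) = d" using D by simp
    ultimately have "periodic (take d s)" unfolding periodic_def u_def using e by metis
    then show False using D(5) unfolding aperiodic_def by simp
  qed
qed

lemma B_translates_coincide:
  assumes s: "s \<in> B n c d1" and s': "s' \<in> B n' c d2"
    and shift: "\<And>j. cyclic_nth s j = cyclic_nth s' (j - \<sigma>)"
    and overlap: "int d1 + int d2 - 2 \<le>
      min (int c + int d1 - 2) (int c + int d2 - 2 + \<sigma>)
        - max (- int (add d1 s)) (- int (add d2 s') + \<sigma>)"
  shows "\<sigma> = 0"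
proof -
  have R2: "repeats_block_on (cyclic_nth s) (\<lambda>m. s' ! nat m) (int d2) \<sigma>
      (- int (add d2 s') + \<sigma>) (int c + int d2 - 2 + \<sigma>)"
    using repeats_block_on_translate[OF B_add(2)[OF s'] shift] .
  have "cyclic_nth s (int c + int d1 - 2 + 1) \<noteq> cyclic_nth s (int c + int d1 - 2 + 1 - int d1)"
    "cyclic_nth s (int c + int d2 - 2 + \<sigma> + 1) \<noteq> cyclic_nth s (int c + int d2 - 2 + \<sigma> + 1 - int d2)"
    using B_break[OF s] B_break[OF s'] by (simp_all add: shift algebra_simps)
  moreover have "0 < int d1" "0 < int d2" using B_D(2)[OF s] B_D(2)[OF s'] by simp_all
  ultimately show ?thesis
    using maximal_runs_coincide[OF B_add(2)[OF s] B_primitive_block[OF s] _ _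
        R2 B_primitive_block[OF s'] _ _ overlap]
    by simp
qed

theorem lemma6:
  fixes n c d1 d2 h t1 t2 :: nat and s :: "bool list"
  assumes "c \<ge> n div 2"
    and "s \<in> B n c d1" and "add d1 s = t1"
    and "1 \<le> h" and "h \<le> n - 1"
    and "rshift h s \<in> B n c d2" and "add d2 (rshift h s) = t2"
  shows "int t1 \<le> int h - (int n - int c - int d1) \<and>
         int h - (int n - int c - int d1) < int d1 + int d2 - int t2"
proof -
  note D1 = B_D[OF assms(2)] and D2 = B_D[OF assms(6)]
  have "s \<noteq> []" "h \<le> length s" using D1(1) assms(4,5) by auto
  note shifts = cyclic_nth_rshift[OF this]
  have bounds: "d1 \<le> c" "d2 \<le> c" "n \<le> 2 * c + 1" "1 \<le> d1" "1 \<le> d2"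
    using D1 D2 assms(1) by simp_all
  show ?thesis
  proof
    show "int t1 \<le> int h - (int n - int c - int d1)"
    proof (rule ccontr)
      assume "\<not> ?thesis"
      then have "- int h = 0"
        using bounds assms(3-5,7)
        by (intro B_translates_coincide[OF assms(2,6)]) (auto simp: shifts(1) min_def max_def)
      then show False using assms(4) by simp
    qed
    show "int h - (int n - int c - int d1) < int d1 + int d2 - int t2"
    proof (rule ccontr)
      assume "\<not> ?thesis"
      then have "int n - int h = 0"
        using bounds assms(3-5,7) D1(1)
        by (intro B_translates_coincide[OF assms(2,6)]) (auto simp: shifts(2) min_def max_def)
      then show False using assms(4,5) by simp
    qed
  qed
qed

end
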